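(* Let $T$ be a Galton–Watson tree with finite alphabet $\mathbb{A}$ and offspring distribution $W$ with $m=\mathbb{E}|W|>1$. For integers $k,a>0$ define $g_{k,a}(s)=\mathbb{P}(Z_k^{(s)}<a)$ for $s\in[0,1]$. Let $(a_k)_{k\in\mathbb{N}}$ be positive integers with $\limsup_{k\to\infty}a_k^{1/k}<m$. Then $g_{k,a_k}(s)\to\mathbb{P}(\text{extinction})$ as $k\to\infty$, for every $s\in(0,1)$.
   Context: The Galton–Watson tree with offspring distribution $W$ (random subset of $\mathbb{A}$, $\mathbb{P}(i\in W)>0$ for all $i$) is $T_0=\{\emptyset\}$, $T_n=\{aj:a\in T_{n-1},j\in W_a\}$, $(W_a)$ independent copies of $W$; extinction means $T_n=\emptyset$ for some $n$. $T_k^{(s)}=T_k\cap Y$ where $Y\subseteq\mathbb{A}^k$ is independent of $T$ with $\mathbb{P}(Y=B)=(1-s)^{|B|}s^{|\mathbb{A}^k\setminus B|}$; $Z_k^{(s)}=|T_k^{(s)}|$. *)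

theory Defs
  imports "HOL-Probability.Probability"
begin

definition words :: "nat \<Rightarrow> 'a list set" where
  "words k = {w. length w = k}"

fun gw_tree :: "('a list \<Rightarrow> 'm \<Rightarrow> 'a set) \<Rightarrow> nat \<Rightarrow> 'm \<Rightarrow> 'a list set" where
  "gw_tree Wf 0 \<omega> = {[]}"
| "gw_tree Wf (Suc n) \<omega> = {u @ [j] | u j. u \<in> gw_tree Wf n \<omega> \<and> j \<in> Wf u \<omega>}"

text \<open>Law of Y: each word of length k kept independently with probability 1-s,
  so P(Y = B) = (1-s)^|B| s^|A^k - B|.\<close>
definition percol_pmf :: "nat \<Rightarrow> real \<Rightarrow> 'a list set pmf" where
  "percol_pmf k s = map_pmf (\<lambda>f. {w. f w}) (Pi_pmf (words k) False (\<lambda>_. bernoulli_pmf (1 - s)))"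

text \<open>g_{k,a}(s) = P(Z_k^{(s)} < a), with Y independent of the tree (product measure).\<close>
definition gw_g :: "'m measure \<Rightarrow> ('a list \<Rightarrow> 'm \<Rightarrow> 'a set) \<Rightarrow> nat \<Rightarrow> nat \<Rightarrow> real \<Rightarrow> real" where
  "gw_g M Wf k a s = measure (M \<Otimes>\<^sub>M measure_pmf (percol_pmf k s))
     {(\<omega>, B). \<omega> \<in> space M \<and> card (gw_tree Wf k \<omega> \<inter> B) < a}"

definition gw_extinction_prob :: "'m measure \<Rightarrow> ('a list \<Rightarrow> 'm \<Rightarrow> 'a set) \<Rightarrow> real" where
  "gw_extinction_prob M Wf = measure M {\<omega> \<in> space M. \<exists>n. gw_tree Wf n \<omega> = {}}"

end

theory Submission
  imports Defs
begin

text \<open>Let f be the generating function of |W|, m = f'(1) its mean and q the extinction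
  probability; the k-th iterate of f is the generating function of Z_k, and f^k(0) = P(T_k = {})
  tends to q. Extinction by generation k forces Z_k^(s) = 0 < a_k, which gives the lower bound.
  For the upper bound, Markov's inequality for x^(Z_k^(s)) given T_k bounds P(Z_k^(s) < a) by
  (s + (1 - s) x)^(Z_k) / x^a; with x = 1 - \<delta>/a_k this yields
  g_k \<le> f^k(1 - (1 - s) \<delta>/a_k) / (1 - \<delta>). Eventually a_k \<le> c^k for some c < m, and near 1
  the map f pushes points away from 1 by a factor larger than c, so iterating from distance
  \<epsilon>/c^k below 1 reaches a fixed distance from 1 after k - O(1) steps and then converges to q.\<close>

lemma expectation_pmf_finite_type:
  fixes p :: "('a::finite) pmf" and f :: "'a \<Rightarrow> real"
  shows "measure_pmf.expectation p f = (\<Sum>x\<in>UNIV. pmf p x * f x)"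
  by (subst integral_measure_pmf_real[where A=UNIV]) (auto simp: mult.commute)

lemma power_one_minus_le:
  fixes t :: real
  assumes "0 \<le> t" "t \<le> 1"
  shows "(1 - t) ^ j \<le> 1 - real j * t + (real j)\<^sup>2 * t\<^sup>2"
proof (induction j)
  case 0
  then show ?case by simp
next
  case (Suc j)
  have "(1 - t) ^ Suc j \<le> (1 - t) * (1 - real j * t + (real j)\<^sup>2 * t\<^sup>2)"
    using Suc assms by (simp add: mult_left_mono)
  also have "\<dots> = 1 - real (Suc j) * t + (real j + (real j)\<^sup>2) * t\<^sup>2 - (real j)\<^sup>2 * t ^ 3"
    by (simp add: algebra_simps power2_eq_square power3_eq_cube)
  also have "\<dots> \<le> 1 - real (Suc j) * t + (real (Suc j))\<^sup>2 * t\<^sup>2"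
    using assms by (simp add: mult_right_mono power2_eq_square algebra_simps)
  finally show ?case .
qed

lemma tendsto_above_lower_limit:
  fixes x l :: "nat \<Rightarrow> real"
  assumes "l \<longlonglongrightarrow> q" "\<And>n. l n \<le> x n"
    and "\<And>e. e > 0 \<Longrightarrow> \<forall>\<^sub>F n in sequentially. x n \<le> q + e"
  shows "x \<longlonglongrightarrow> q"
proof (rule order_tendstoI)
  fix b assume "b < q"
  from order_tendstoD(1)[OF assms(1) this] show "\<forall>\<^sub>F n in sequentially. b < x n"
    by (rule eventually_mono) (meson assms(2) less_le_trans)
next
  fix b assume "q < b"
  then have "\<forall>\<^sub>F n in sequentially. x n \<le> q + (b - q) / 2" by (intro assms(3)) simp
  then show "\<forall>\<^sub>F n in sequentially. x n < b"
    by (rule eventually_mono) (use \<open>q < b\<close> in \<open>simp add: field_simps\<close>)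
qed

lemma funpow_limit_fixpoint:
  assumes "isCont f L" "(\<lambda>n. (f ^^ n) y) \<longlonglongrightarrow> L"
  shows "f L = L"
proof -
  have "(\<lambda>n. f ((f ^^ n) y)) \<longlonglongrightarrow> f L"
    by (rule isCont_tendsto_compose[OF assms])
  moreover have "(\<lambda>n. f ((f ^^ n) y)) \<longlonglongrightarrow> L"
    using LIMSEQ_Suc[OF assms(2)] by simp
  ultimately show ?thesis by (rule LIMSEQ_unique)
qed

lemma eventually_le_power_of_limsup_root:
  fixes a :: "nat \<Rightarrow> real"
  assumes "limsup (\<lambda>k. ereal (root k (a k))) < ereal m" "1 < m" "\<And>k. 0 \<le> a k"
  obtains c where "1 \<le> c" "c < m" "\<forall>\<^sub>F k in sequentially. a k \<le> c ^ k"
proof -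
  obtain c0 where c0: "limsup (\<lambda>k. ereal (root k (a k))) < ereal c0" "c0 < m"
    using ereal_dense2[OF assms(1)] by auto
  define c where "c = max c0 ((1 + m) / 2)"
  have "limsup (\<lambda>k. ereal (root k (a k))) < ereal c"
    using c0(1) unfolding c_def by (rule order.strict_trans2) simp
  then have "\<forall>\<^sub>F k in sequentially. ereal (root k (a k)) < ereal c"
    by (rule Limsup_lessD)
  then have "\<forall>\<^sub>F k in sequentially. a k \<le> c ^ k"
    using eventually_gt_at_top[of 0]
  proof eventually_elim
    case (elim k)
    then have "a k = root k (a k) ^ k" using assms(3) by simp
    also have "\<dots> \<le> c ^ k" using elim assms(3) by (intro power_mono) auto
    finally show ?case .
  qed
  moreover have "1 \<le> c" "c < m" using c0 assms(2) unfolding c_def by (auto simp: le_max_iff_disj)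
  ultimately show ?thesis using that by blast
qed

section \<open>The offspring generating function\<close>

definition offspring_pgf :: "('a::finite) set pmf \<Rightarrow> real \<Rightarrow> real" where
  "offspring_pgf W y = measure_pmf.expectation W (\<lambda>S. y ^ card S)"

definition offspring_mean :: "('a::finite) set pmf \<Rightarrow> real" where
  "offspring_mean W = measure_pmf.expectation W (\<lambda>S. real (card S))"

context
  fixes W :: "('a::finite) set pmf"
begin

lemma offspring_pgf_sum: "offspring_pgf W y = (\<Sum>S\<in>UNIV. pmf W S * y ^ card S)"
  by (simp add: offspring_pgf_def expectation_pmf_finite_type)

lemma offspring_mean_sum: "offspring_mean W = (\<Sum>S\<in>UNIV. pmf W S * real (card S))"
  by (simp add: offspring_mean_def expectation_pmf_finite_type)

lemma offspring_pgf_one [simp]: "offspring_pgf W 1 = 1"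
  by (simp add: offspring_pgf_def)

lemma offspring_pgf_nonneg: "0 \<le> y \<Longrightarrow> 0 \<le> offspring_pgf W y"
  unfolding offspring_pgf_sum by (intro sum_nonneg) auto

lemma offspring_pgf_mono: "0 \<le> x \<Longrightarrow> x \<le> y \<Longrightarrow> offspring_pgf W x \<le> offspring_pgf W y"
  unfolding offspring_pgf_sum by (intro sum_mono mult_left_mono power_mono) auto

lemma offspring_pgf_le_one: "0 \<le> y \<Longrightarrow> y \<le> 1 \<Longrightarrow> offspring_pgf W y \<le> 1"
  using offspring_pgf_mono[of y 1] by simp

lemma isCont_offspring_pgf: "isCont (offspring_pgf W) y"
  unfolding offspring_pgf_sum by (intro continuous_intros)

lemma convex_offspring_pgf: "convex_on {0..} (offspring_pgf W)"
proof (rule convex_onI)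
  fix t x y :: real
  assume t: "0 < t" "t < 1" and xy: "x \<in> {0..}" "y \<in> {0..}"
  have "((1 - t) * x + t * y) ^ n \<le> (1 - t) * x ^ n + t * y ^ n" for n
  proof -
    have "convex_on {0..} (\<lambda>x::real. x ^ n)"
      by (cases "even n") (auto intro: convex_power_odd convex_on_subset[OF convex_power_even])
    from convex_onD[OF this, of t x y] show ?thesis using t xy by simp
  qed
  then have "offspring_pgf W ((1 - t) * x + t * y)
      \<le> (\<Sum>S\<in>UNIV. pmf W S * ((1 - t) * x ^ card S + t * y ^ card S))"
    unfolding offspring_pgf_sum by (intro sum_mono mult_left_mono) auto
  also have "\<dots> = (1 - t) * offspring_pgf W x + t * offspring_pgf W y"
    by (simp add: offspring_pgf_sum sum_distrib_left sum.distrib sum_subtractf algebra_simps)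
  finally show "offspring_pgf W ((1 - t) *\<^sub>R x + t *\<^sub>R y)
      \<le> (1 - t) * offspring_pgf W x + t * offspring_pgf W y" by simp
qed (rule convex_real_interval)

lemma one_minus_offspring_pgf_ge:
  assumes "0 \<le> t" "t \<le> 1"
  shows "t * offspring_mean W * (1 - real CARD('a) * t) \<le> 1 - offspring_pgf W (1 - t)"
proof -
  have "real (card S) * t - real CARD('a) * real (card S) * t\<^sup>2 \<le> 1 - (1 - t) ^ card S"
    for S :: "'a set"
  proof -
    have "real (card S) * real (card S) \<le> real CARD('a) * real (card S)"
      by (intro mult_right_mono) (auto simp: card_mono)
    then have "(real (card S))\<^sup>2 * t\<^sup>2 \<le> real CARD('a) * real (card S) * t\<^sup>2"
      by (intro mult_right_mono) (auto simp: power2_eq_square)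
    then show ?thesis using power_one_minus_le[OF assms, of "card S"] by linarith
  qed
  then have "(\<Sum>S\<in>UNIV. pmf W S * (real (card S) * t - real CARD('a) * real (card S) * t\<^sup>2))
      \<le> (\<Sum>S\<in>UNIV. pmf W S * (1 - (1 - t) ^ card S))"
    by (intro sum_mono mult_left_mono) auto
  moreover have "(\<Sum>S\<in>UNIV. pmf W S) = 1"
    using sum_pmf_eq_1[of UNIV W] by simp
  ultimately show ?thesis
    by (simp add: offspring_pgf_sum offspring_mean_sum sum_distrib_left sum_distrib_right
        sum_subtractf algebra_simps power2_eq_square)
qed

text \<open>\<open>offspring_mean W\<close> is the derivative of \<open>offspring_pgf W\<close> at 1.\<close>
lemma offspring_pgf_below_line:
  assumes "0 < c" "c < offspring_mean W"
  obtains t0 where "0 < t0" "t0 \<le> 1"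
    "\<And>t. 0 \<le> t \<Longrightarrow> t \<le> t0 \<Longrightarrow> offspring_pgf W (1 - t) \<le> 1 - c * t"
proof
  define m where "m = offspring_mean W"
  define t0 where "t0 = min 1 ((1 - c / m) / real CARD('a))"
  have "m > 0" "c / m < 1" using assms unfolding m_def by auto
  then show "0 < t0" "t0 \<le> 1" unfolding t0_def by auto
  fix t assume t: "0 \<le> t" "t \<le> t0"
  then have "c \<le> m * (1 - real CARD('a) * t)"
    using \<open>m > 0\<close> by (simp add: t0_def field_simps)
  from mult_right_mono[OF this t(1)]
  have "c * t \<le> t * m * (1 - real CARD('a) * t)" by (simp add: algebra_simps)
  also have "\<dots> \<le> 1 - offspring_pgf W (1 - t)"
    using one_minus_offspring_pgf_ge[of t] t \<open>t0 \<le> 1\<close> unfolding m_def by simp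
  finally show "offspring_pgf W (1 - t) \<le> 1 - c * t" by simp
qed

lemma funpow_offspring_pgf_nonneg: "0 \<le> y \<Longrightarrow> 0 \<le> (offspring_pgf W ^^ n) y"
  by (induction n) (auto intro: offspring_pgf_nonneg)

lemma funpow_offspring_pgf_le_one: "0 \<le> y \<Longrightarrow> y \<le> 1 \<Longrightarrow> (offspring_pgf W ^^ n) y \<le> 1"
  by (induction n) (auto intro: offspring_pgf_le_one funpow_offspring_pgf_nonneg)

lemma funpow_offspring_pgf_mono:
  "0 \<le> x \<Longrightarrow> x \<le> y \<Longrightarrow> (offspring_pgf W ^^ n) x \<le> (offspring_pgf W ^^ n) y"
  by (induction n) (auto intro: offspring_pgf_mono funpow_offspring_pgf_nonneg)

text \<open>Convexity: \<open>y\<close> is a convex combination of the fixed point \<open>q\<close> and a point \<open>z\<close> near 1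
  where the generating function is below the diagonal.\<close>
lemma offspring_pgf_less_above_fixpoint:
  assumes m: "offspring_mean W > 1" and q: "offspring_pgf W q = q" "0 \<le> q" "q < y"
    and "y < 1"
  shows "offspring_pgf W y < y"
proof -
  define c where "c = (1 + offspring_mean W) / 2"
  have c: "1 < c" "c < offspring_mean W" using m unfolding c_def by auto
  obtain t0 where t0: "0 < t0" "t0 \<le> 1"
    and below: "\<And>t. 0 \<le> t \<Longrightarrow> t \<le> t0 \<Longrightarrow> offspring_pgf W (1 - t) \<le> 1 - c * t"
    using offspring_pgf_below_line[of c] c by auto
  define t where "t = min t0 ((1 - y) / 2)"
  have t: "0 < t" "t \<le> t0" using t0 \<open>y < 1\<close> unfolding t_def by auto
  have "t \<le> (1 - y) / 2" unfolding t_def by (rule min.cobounded2)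
  define z where "z = 1 - t"
  have z: "y < z" "z < 1" using t \<open>t \<le> (1 - y) / 2\<close> \<open>y < 1\<close> unfolding z_def by auto
  have "1 * t < c * t" by (rule mult_strict_right_mono[OF c(1) t(1)])
  then have fz: "offspring_pgf W z < z" using below[of t] t unfolding z_def by linarith
  define l where "l = (y - q) / (z - q)"
  have l: "0 \<le> l" "l \<le> 1" using q z unfolding l_def by auto
  have "l * (z - q) = y - q" using q z unfolding l_def by simp
  then have y: "y = (1 - l) * q + l * z" by (simp add: algebra_simps)
  have "offspring_pgf W y \<le> (1 - l) * offspring_pgf W q + l * offspring_pgf W z"
    using convex_onD[OF convex_offspring_pgf l, of q z] q z y by simp
  also have "\<dots> < (1 - l) * q + l * z"
    using q fz l \<open>q < y\<close> y by (cases "l = 0") (auto simp: mult_strict_left_mono)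
  finally show ?thesis using y by simp
qed

lemma funpow_offspring_pgf_tendsto:
  assumes m: "offspring_mean W > 1" and lim: "(\<lambda>n. (offspring_pgf W ^^ n) 0) \<longlonglongrightarrow> q"
    and y: "0 \<le> y" "y < 1"
  shows "(\<lambda>n. (offspring_pgf W ^^ n) y) \<longlonglongrightarrow> q"
proof -
  have fq: "offspring_pgf W q = q"
    by (rule funpow_limit_fixpoint[OF isCont_offspring_pgf lim])
  have q0: "0 \<le> q"
    by (rule LIMSEQ_le_const[OF lim]) (auto intro: funpow_offspring_pgf_nonneg)
  have funpow_q: "(offspring_pgf W ^^ n) q = q" for n
    by (induction n) (simp_all add: fq)
  show ?thesis
  proof (cases "y \<le> q")
    case True
    show ?thesis
    proof (rule tendsto_sandwich[OF _ _ lim tendsto_const])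
      show "\<forall>\<^sub>F n in sequentially. (offspring_pgf W ^^ n) 0 \<le> (offspring_pgf W ^^ n) y"
        using y by (auto intro!: always_eventually funpow_offspring_pgf_mono)
      show "\<forall>\<^sub>F n in sequentially. (offspring_pgf W ^^ n) y \<le> q"
        using funpow_offspring_pgf_mono[of y q] True y funpow_q by auto
    qed
  next
    case False
    then have "q < y" by simp
    have "offspring_pgf W y \<le> y"
      using offspring_pgf_less_above_fixpoint[OF m fq q0 \<open>q < y\<close> y(2)] by simp
    then have dec: "decseq (\<lambda>n. (offspring_pgf W ^^ n) y)"
      using y by (intro decseq_SucI)
        (simp add: funpow_Suc_right funpow_offspring_pgf_mono offspring_pgf_nonneg del: funpow.simps)
    have above_q: "q \<le> (offspring_pgf W ^^ n) y" for n
      using funpow_offspring_pgf_mono[of q y n] funpow_q q0 \<open>q < y\<close> by simp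
    then obtain L where L: "(\<lambda>n. (offspring_pgf W ^^ n) y) \<longlonglongrightarrow> L"
      using decseq_convergent[OF dec] by blast
    have "offspring_pgf W L = L"
      by (rule funpow_limit_fixpoint[OF isCont_offspring_pgf L])
    moreover have "q \<le> L" by (rule LIMSEQ_le_const[OF L]) (use above_q in auto)
    moreover have "L \<le> y"
      by (rule LIMSEQ_le_const2[OF L]) (use dec in \<open>force simp: decseq_def\<close>)
    ultimately have "L = q"
      using offspring_pgf_less_above_fixpoint[OF m fq q0, of L] y by fastforce
    then show ?thesis using L by simp
  qed
qed

lemma one_minus_funpow_offspring_pgf_ge:
  assumes c: "1 \<le> c" and r: "0 \<le> r"
    and below: "\<And>t. 0 \<le> t \<Longrightarrow> t \<le> r \<Longrightarrow> offspring_pgf W (1 - t) \<le> 1 - c * t"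
    and v: "0 \<le> v" "v \<le> 1"
  shows "min r (v * c ^ n) \<le> 1 - (offspring_pgf W ^^ n) (1 - v)"
proof (induction n)
  case 0
  then show ?case using v by simp
next
  case (Suc n)
  define u where "u = 1 - (offspring_pgf W ^^ n) (1 - v)"
  define w where "w = min r (v * c ^ n)"
  have "u \<le> 1" using funpow_offspring_pgf_nonneg[of "1 - v" n] v unfolding u_def by simp
  have w: "0 \<le> w" "w \<le> r" "w \<le> u" using Suc r v c unfolding w_def u_def by auto
  have "(offspring_pgf W ^^ Suc n) (1 - v) = offspring_pgf W (1 - u)" unfolding u_def by simp
  also have "\<dots> \<le> offspring_pgf W (1 - w)" using \<open>u \<le> 1\<close> w by (intro offspring_pgf_mono) auto
  also have "\<dots> \<le> 1 - c * w" using below w by simp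
  finally have "c * w \<le> 1 - (offspring_pgf W ^^ Suc n) (1 - v)" by simp
  moreover have "c * w = min (c * r) (v * c ^ Suc n)"
    unfolding w_def using c by (simp add: min_mult_distrib_left algebra_simps)
  moreover have "r \<le> c * r" using mult_right_mono[OF c r] by simp
  ultimately show ?case by linarith
qed

text \<open>Starting at distance \<open>\<epsilon> / c ^ k\<close> from 1 with \<open>c <\<close> the mean, the iterates escape
  to a fixed distance \<open>t0\<close> from 1 in \<open>k - D\<close> steps (for large \<open>k\<close>) and then need only \<open>D\<close>
  further steps to get close to \<open>q\<close>.\<close>
lemma eventually_funpow_offspring_pgf_le:
  assumes lim: "(\<lambda>n. (offspring_pgf W ^^ n) 0) \<longlonglongrightarrow> q"
    and c: "1 \<le> c" "c < offspring_mean W" and eps: "0 < \<epsilon>" "\<epsilon> \<le> 1" and "0 < e"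
  shows "\<forall>\<^sub>F k in sequentially. (offspring_pgf W ^^ k) (1 - \<epsilon> / c ^ k) \<le> q + e"
proof -
  define c' where "c' = (c + offspring_mean W) / 2"
  have c': "c < c'" "c' < offspring_mean W" using c unfolding c'_def by auto
  obtain t0 where t0: "0 < t0" "t0 \<le> 1"
    and below: "\<And>t. 0 \<le> t \<Longrightarrow> t \<le> t0 \<Longrightarrow> offspring_pgf W (1 - t) \<le> 1 - c' * t"
    using offspring_pgf_below_line[of c'] c' c by auto
  have "(\<lambda>n. (offspring_pgf W ^^ n) (1 - t0)) \<longlonglongrightarrow> q"
    using funpow_offspring_pgf_tendsto[OF _ lim, of "1 - t0"] c t0 by simp
  from order_tendstoD(2)[OF this, of "q + e"] \<open>0 < e\<close>
  obtain D where D: "(offspring_pgf W ^^ D) (1 - t0) < q + e"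
    by (auto simp: eventually_sequentially)
  obtain K where K: "t0 * c' ^ D / \<epsilon> < (c' / c) ^ K"
    using real_arch_pow[of "c' / c"] c c' by auto
  show ?thesis
    unfolding eventually_sequentially
  proof (intro exI allI impI)
    fix k assume k: "max K D \<le> k"
    define v where "v = \<epsilon> / c ^ k"
    have v: "0 \<le> v" "v \<le> 1"
      unfolding v_def using eps one_le_power[OF c(1), of k] by (auto simp: divide_le_eq_1)
    have "(c' / c) ^ K \<le> (c' / c) ^ k" using c c' k by (intro power_increasing) auto
    with K have "t0 * c' ^ D / \<epsilon> < (c' / c) ^ k" by linarith
    also have "(c' / c) ^ k = v * c' ^ (k - D) * c' ^ D / \<epsilon>"
      using eps c k by (simp add: v_def power_divide power_add[symmetric])
    finally have "t0 \<le> v * c' ^ (k - D)"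
      using eps c' c by (simp add: divide_less_cancel)
    then have "t0 \<le> 1 - (offspring_pgf W ^^ (k - D)) (1 - v)"
      using one_minus_funpow_offspring_pgf_ge[where c=c' and r=t0 and n="k - D", OF _ _ below v] c c' t0
      by simp
    then have "(offspring_pgf W ^^ D) ((offspring_pgf W ^^ (k - D)) (1 - v))
        \<le> (offspring_pgf W ^^ D) (1 - t0)"
      using funpow_offspring_pgf_nonneg[of "1 - v" "k - D"] v by (intro funpow_offspring_pgf_mono) auto
    moreover have "k = D + (k - D)" using k by simp
    then have "(offspring_pgf W ^^ k) (1 - v)
        = (offspring_pgf W ^^ D) ((offspring_pgf W ^^ (k - D)) (1 - v))"
      by (metis comp_apply funpow_add)
    ultimately show "(offspring_pgf W ^^ k) (1 - \<epsilon> / c ^ k) \<le> q + e"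
      using D unfolding v_def by simp
  qed
qed

lemma funpow_offspring_pgf_rate_tendsto:
  assumes lim: "(\<lambda>n. (offspring_pgf W ^^ n) 0) \<longlonglongrightarrow> q"
    and c: "1 \<le> c" "c < offspring_mean W" and eps: "0 < \<epsilon>" "\<epsilon> \<le> 1"
  shows "(\<lambda>k. (offspring_pgf W ^^ k) (1 - \<epsilon> / c ^ k)) \<longlonglongrightarrow> q"
proof (rule tendsto_above_lower_limit[OF lim])
  show "(offspring_pgf W ^^ k) 0 \<le> (offspring_pgf W ^^ k) (1 - \<epsilon> / c ^ k)" for k
    using eps one_le_power[OF c(1), of k] by (intro funpow_offspring_pgf_mono) (auto simp: divide_le_eq_1)
qed (rule eventually_funpow_offspring_pgf_le[OF lim c eps])

end

section \<open>Generations and percolation\<close>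

lemma finite_words: "finite (words k :: ('a::finite) list set)"
  using finite_lists_length_eq[of "UNIV :: 'a set" k] by (simp add: words_def)

lemma finite_lists_shorter: "finite {u :: ('a::finite) list. length u < k}"
  using finite_lists_length_le[of "UNIV :: 'a set" k] by (rule finite_subset[rotated]) auto

lemma length_gw_tree: "u \<in> gw_tree Wf k \<omega> \<Longrightarrow> length u = k"
  by (induction k arbitrary: u) auto

lemma gw_tree_subset_words: "gw_tree Wf k \<omega> \<subseteq> words k"
  using length_gw_tree by (auto simp: words_def)

lemma finite_gw_tree: "finite (gw_tree Wf k \<omega> :: ('a::finite) list set)"
  using finite_words gw_tree_subset_words by (rule finite_subset[rotated])

lemma gw_tree_cong:
  "(\<And>u. length u < k \<Longrightarrow> Wf u \<omega> = Wf' u \<omega>') \<Longrightarrow> gw_tree Wf k \<omega> = gw_tree Wf' k \<omega>'"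
proof (induction k)
  case (Suc k)
  then have "gw_tree Wf k \<omega> = gw_tree Wf' k \<omega>'" by simp
  moreover have "Wf u \<omega> = Wf' u \<omega>'" if "u \<in> gw_tree Wf k \<omega>" for u
    using Suc.prems length_gw_tree[OF that] by simp
  ultimately show ?case by auto
qed simp

lemma card_gw_tree_Suc:
  "card (gw_tree Wf (Suc k) \<omega>) = (\<Sum>u\<in>gw_tree Wf k \<omega>. card (Wf u \<omega> :: ('a::finite) set))"
proof -
  have "gw_tree Wf (Suc k) \<omega> = (\<Union>u\<in>gw_tree Wf k \<omega>. (\<lambda>j. u @ [j]) ` Wf u \<omega>)" by auto
  also have "card \<dots> = (\<Sum>u\<in>gw_tree Wf k \<omega>. card ((\<lambda>j. u @ [j]) ` Wf u \<omega>))"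
    by (rule card_UN_disjoint) (auto simp: finite_gw_tree)
  also have "\<dots> = (\<Sum>u\<in>gw_tree Wf k \<omega>. card (Wf u \<omega>))"
    by (intro sum.cong refl card_image) (auto simp: inj_on_def)
  finally show ?thesis .
qed

lemma expectation_percol_power:
  fixes S :: "('a::finite) list set"
  assumes S: "S \<subseteq> words k" and s: "0 \<le> s" "s \<le> 1" and "0 \<le> x"
  shows "measure_pmf.expectation (percol_pmf k s) (\<lambda>B. x ^ card (S \<inter> B))
    = (s + (1 - s) * x) ^ card S"
proof -
  let ?B = "Pi_pmf (words k) False (\<lambda>_. bernoulli_pmf (1 - s))"
  have prod_if: "(\<Prod>w\<in>words k. if P w then z else 1) = z ^ card {w \<in> words k. P w}"
    for P :: "'a list \<Rightarrow> bool" and z :: real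
    using finite_words by (subst prod.inter_filter[symmetric]) auto
  have "measure_pmf.expectation (percol_pmf k s) (\<lambda>B. x ^ card (S \<inter> B))
      = measure_pmf.expectation ?B (\<lambda>f. \<Prod>w\<in>words k. if w \<in> S \<and> f w then x else 1)"
  proof -
    have "{w \<in> words k. w \<in> S \<and> f w} = S \<inter> {w. f w}" for f using S by auto
    then show ?thesis unfolding percol_pmf_def by (simp add: prod_if)
  qed
  also have "\<dots> = (\<Prod>w\<in>words k. measure_pmf.expectation (bernoulli_pmf (1 - s))
      (\<lambda>b. if w \<in> S \<and> b then x else 1))"
    by (rule expectation_prod_Pi_pmf[OF finite_words])
      (auto intro: integrable_measure_pmf_finite simp: \<open>0 \<le> x\<close>)
  also have "\<dots> = (\<Prod>w\<in>words k. if w \<in> S then s + (1 - s) * x else 1)"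
    using s by (intro prod.cong refl) (auto simp: algebra_simps)
  also have "\<dots> = (s + (1 - s) * x) ^ card S"
  proof -
    have "{w \<in> words k. w \<in> S} = S" using S by auto
    then show ?thesis by (simp add: prod_if)
  qed
  finally show ?thesis .
qed

text \<open>A Chernoff-type bound: Markov's inequality applied to \<open>x ^ card (S \<inter> B)\<close>.\<close>
lemma prob_percol_card_less_le:
  fixes S :: "('a::finite) list set"
  assumes S: "S \<subseteq> words k" and s: "0 \<le> s" "s \<le> 1" and x: "0 < x" "x \<le> 1"
  shows "measure_pmf.prob (percol_pmf k s) {B. card (S \<inter> B) < a}
    \<le> (s + (1 - s) * x) ^ card S / x ^ a"
proof -
  let ?P = "percol_pmf k s"
  have "measure_pmf.prob ?P {B. card (S \<inter> B) < a}
      \<le> measure_pmf.prob ?P {B. x ^ a \<le> x ^ card (S \<inter> B)}"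
    using x by (intro measure_pmf.finite_measure_mono) (auto intro: power_decreasing)
  also have "\<dots> \<le> measure_pmf.expectation ?P (\<lambda>B. x ^ card (S \<inter> B)) / x ^ a"
  proof -
    have "integrable ?P (\<lambda>B. x ^ card (S \<inter> B))"
      using x by (intro measure_pmf.integrable_const_bound[where B=1] AE_I2) (auto intro: power_le_one)
    from integral_Markov_inequality_measure[OF this, of UNIV "x ^ a"] show ?thesis
      using x by simp
  qed
  also have "\<dots> = (s + (1 - s) * x) ^ card S / x ^ a"
    using expectation_percol_power[OF S s, of x] x by simp
  finally show ?thesis .
qed

section \<open>Galton-Watson trees with independent offspring\<close>

lemma measurable_PiM_finite_count_space:
  assumes "finite K" "space N = UNIV"
  shows "g \<in> PiM K (\<lambda>_. count_space (UNIV :: ('b::finite) set)) \<rightarrow>\<^sub>M N"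
proof (rule measurableI)
  let ?P = "PiM K (\<lambda>_. count_space (UNIV :: 'b set))"
  fix A
  have singleton: "{F} \<in> sets ?P" if "F \<in> space ?P" for F
  proof -
    have "{F} = PiE K (\<lambda>i. {F i})" using that by (simp add: space_PiM PiE_singleton PiE_iff)
    then show ?thesis using assms(1) by (simp add: sets_PiM_I_finite)
  qed
  have "countable (space ?P)"
    using assms(1) by (simp add: space_PiM countable_finite finite_PiE)
  then have "countable (g -` A \<inter> space ?P)" by (rule countable_subset[rotated]) blast
  with singleton show "g -` A \<inter> space ?P \<in> sets ?P" by (rule sets.countable) blast+
qed (simp add: assms(2))

locale galton_watson = prob_space M for M :: "'m measure" +
  fixes W :: "('a::finite) set pmf" and Wf :: "'a list \<Rightarrow> 'm \<Rightarrow> 'a set"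
  assumes indep_offspring: "indep_vars (\<lambda>_. count_space UNIV) Wf UNIV"
    and distr_offspring: "\<And>u. distr M (count_space UNIV) (Wf u) = measure_pmf W"
begin

lemma measurable_offspring: "Wf u \<in> M \<rightarrow>\<^sub>M count_space UNIV"
  using indep_offspring by (auto simp: indep_vars_def)

lemma measurable_offspring_restrict_fun:
  assumes "finite K" "space N = UNIV"
  shows "(\<lambda>\<omega>. g (restrict (\<lambda>u. Wf u \<omega>) K)) \<in> M \<rightarrow>\<^sub>M N"
  using measurable_compose[OF measurable_restrict[OF measurable_offspring]
      measurable_PiM_finite_count_space[OF assms]] .

text \<open>Generation \<open>k\<close> is a function of the offspring sets of the finitely many words shorter
  than \<open>k\<close>.\<close>
lemma gw_tree_eq_restrict:
  "gw_tree Wf k \<omega> = gw_tree (\<lambda>u (_::unit). restrict (\<lambda>u. Wf u \<omega>) {u. length u < k} u) k ()"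
  by (rule gw_tree_cong) simp

lemma measurable_gw_tree_fun:
  assumes "space N = UNIV"
  shows "(\<lambda>\<omega>. h (gw_tree Wf k \<omega>)) \<in> M \<rightarrow>\<^sub>M N"
  using measurable_offspring_restrict_fun[OF finite_lists_shorter assms,
      of "\<lambda>F. h (gw_tree (\<lambda>u _. F u) k ())" k]
  unfolding gw_tree_eq_restrict[of k, symmetric] .

lemma sets_gw_tree: "{\<omega> \<in> space M. P (gw_tree Wf k \<omega>)} \<in> events"
  using measurable_gw_tree_fun[of "count_space UNIV" P k] by (rule predE) simp

lemma sets_gw_tree_eq [measurable]: "{\<omega> \<in> space M. gw_tree Wf k \<omega> = S} \<in> events"
  using sets_gw_tree[of "\<lambda>T. T = S"] by simp

lemma integrable_prod_offspring_power:
  fixes y :: real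
  assumes "0 \<le> y" "y \<le> 1"
  shows "integrable M (\<lambda>\<omega>. \<Prod>u\<in>S. y ^ card (Wf u \<omega>))"
proof (intro integrable_const_bound[where B=1])
  have "(\<lambda>\<omega>. y ^ card (Wf u \<omega>)) \<in> borel_measurable M" for u
    using measurable_compose[OF measurable_offspring, of "\<lambda>T. y ^ card T" borel u] by simp
  then show "(\<lambda>\<omega>. \<Prod>u\<in>S. y ^ card (Wf u \<omega>)) \<in> borel_measurable M" by measurable
qed (use assms in \<open>auto simp: abs_prod intro!: prod_le_1 power_le_one\<close>)

lemma expectation_offspring_power: "expectation (\<lambda>\<omega>. y ^ card (Wf u \<omega>)) = offspring_pgf W y"
proof -
  have "expectation (\<lambda>\<omega>. y ^ card (Wf u \<omega>))
      = integral\<^sup>L (distr M (count_space UNIV) (Wf u)) (\<lambda>T. y ^ card T)"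
    by (rule integral_distr[symmetric]) (auto simp: measurable_offspring)
  then show ?thesis by (simp add: distr_offspring offspring_pgf_def)
qed

lemma expectation_prod_offspring_power:
  fixes y :: real
  assumes "finite S" "0 \<le> y" "y \<le> 1"
  shows "expectation (\<lambda>\<omega>. \<Prod>u\<in>S. y ^ card (Wf u \<omega>)) = offspring_pgf W y ^ card S"
proof -
  have "indep_vars (\<lambda>_. borel) (\<lambda>u \<omega>. y ^ card (Wf u \<omega>)) S"
    by (rule indep_vars_compose2[OF indep_vars_subset[OF indep_offspring]]) auto
  then have "expectation (\<lambda>\<omega>. \<Prod>u\<in>S. y ^ card (Wf u \<omega>))
      = (\<Prod>u\<in>S. expectation (\<lambda>\<omega>. y ^ card (Wf u \<omega>)))"
    using integrable_prod_offspring_power[OF assms(2,3), of "{_}"]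
    by (intro indep_vars_lebesgue_integral[OF assms(1)]) auto
  then show ?thesis by (simp add: expectation_offspring_power)
qed

definition generation_prob :: "nat \<Rightarrow> 'a list set \<Rightarrow> real" where
  "generation_prob k S = prob {\<omega> \<in> space M. gw_tree Wf k \<omega> = S}"

lemma expectation_split_gw_tree:
  fixes H :: "'a list set \<Rightarrow> 'm \<Rightarrow> real"
  assumes "\<And>S. S \<subseteq> words k \<Longrightarrow> integrable M (H S)"
  shows "expectation (\<lambda>\<omega>. H (gw_tree Wf k \<omega>) \<omega>) = (\<Sum>S\<in>Pow (words k).
    expectation (\<lambda>\<omega>. H S \<omega> * indicator {\<omega> \<in> space M. gw_tree Wf k \<omega> = S} \<omega>))"
proof -
  have "H (gw_tree Wf k \<omega>) \<omega>
      = (\<Sum>S\<in>Pow (words k). H S \<omega> * indicator {\<omega> \<in> space M. gw_tree Wf k \<omega> = S} \<omega>)"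
    if "\<omega> \<in> space M" for \<omega>
  proof -
    have "(\<Sum>S\<in>Pow (words k). H S \<omega> * indicator {\<omega> \<in> space M. gw_tree Wf k \<omega> = S} \<omega>)
        = (\<Sum>S\<in>Pow (words k). if gw_tree Wf k \<omega> = S then H S \<omega> else 0)"
      using that by (intro sum.cong refl) (simp add: indicator_def)
    also have "\<dots> = H (gw_tree Wf k \<omega>) \<omega>"
      using gw_tree_subset_words[of Wf k \<omega>] finite_words[of k] by (subst sum.delta') auto
    finally show ?thesis by simp
  qed
  then have "expectation (\<lambda>\<omega>. H (gw_tree Wf k \<omega>) \<omega>) = expectation (\<lambda>\<omega>.
      \<Sum>S\<in>Pow (words k). H S \<omega> * indicator {\<omega> \<in> space M. gw_tree Wf k \<omega> = S} \<omega>)"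
    by (rule Bochner_Integration.integral_cong[OF refl])
  also have "\<dots> = (\<Sum>S\<in>Pow (words k).
      expectation (\<lambda>\<omega>. H S \<omega> * indicator {\<omega> \<in> space M. gw_tree Wf k \<omega> = S} \<omega>))"
    by (rule Bochner_Integration.integral_sum)
      (auto intro!: integrable_real_mult_indicator sets_gw_tree assms)
  finally show ?thesis .
qed

lemma expectation_fun_gw_tree:
  "expectation (\<lambda>\<omega>. h (gw_tree Wf k \<omega>)) = (\<Sum>S\<in>Pow (words k). h S * generation_prob k S)"
  using expectation_split_gw_tree[of k "\<lambda>S _. h S"]
  by (simp add: generation_prob_def sets.Int_space_eq2)

lemma integrable_offspring_restrict_fun:
  fixes g :: "('a list \<Rightarrow> 'a set) \<Rightarrow> real"
  assumes "finite K"
  shows "integrable M (\<lambda>\<omega>. g (restrict (\<lambda>u. Wf u \<omega>) K))"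
proof (rule integrable_const_bound[where B="Max ((\<lambda>F. \<bar>g F\<bar>) ` PiE K (\<lambda>_. UNIV))"])
  show "AE \<omega> in M. norm (g (restrict (\<lambda>u. Wf u \<omega>) K)) \<le> Max ((\<lambda>F. \<bar>g F\<bar>) ` PiE K (\<lambda>_. UNIV))"
    using assms by (intro AE_I2 Max_ge) (auto simp: finite_PiE)
qed (rule measurable_offspring_restrict_fun[OF assms], simp)

lemma expectation_mult_offspring_restrict_fun:
  fixes g h :: "('a list \<Rightarrow> 'a set) \<Rightarrow> real"
  assumes "finite A" "finite B" "A \<inter> B = {}"
  shows "expectation (\<lambda>\<omega>. g (restrict (\<lambda>u. Wf u \<omega>) A) * h (restrict (\<lambda>u. Wf u \<omega>) B))
    = expectation (\<lambda>\<omega>. g (restrict (\<lambda>u. Wf u \<omega>) A))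
      * expectation (\<lambda>\<omega>. h (restrict (\<lambda>u. Wf u \<omega>) B))"
proof (rule indep_var_lebesgue_integral)
  have "indep_var (PiM A (\<lambda>_. count_space UNIV)) (\<lambda>\<omega>. restrict (\<lambda>u. Wf u \<omega>) A)
      (PiM B (\<lambda>_. count_space UNIV)) (\<lambda>\<omega>. restrict (\<lambda>u. Wf u \<omega>) B)"
    using assms(3) by (intro indep_var_restrict[OF indep_offspring]) auto
  then show "indep_var borel (\<lambda>\<omega>. g (restrict (\<lambda>u. Wf u \<omega>) A))
      borel (\<lambda>\<omega>. h (restrict (\<lambda>u. Wf u \<omega>) B))"
    by (rule indep_var_compose[unfolded comp_def])
      (auto intro!: measurable_PiM_finite_count_space assms)
qed (auto intro: integrable_offspring_restrict_fun assms)

text \<open>The indicator of \<open>{T_k = S}\<close> depends only on the offspring of words shorter than \<open>k\<close>,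
  the product only on the offspring of the words in \<open>S\<close>, which have length \<open>k\<close>.\<close>
lemma expectation_prod_offspring_power_gw_tree_eq:
  fixes y :: real
  assumes S: "S \<subseteq> words k" and y: "0 \<le> y" "y \<le> 1"
  shows "expectation (\<lambda>\<omega>. (\<Prod>u\<in>S. y ^ card (Wf u \<omega>))
      * indicator {\<omega> \<in> space M. gw_tree Wf k \<omega> = S} \<omega>)
    = offspring_pgf W y ^ card S * generation_prob k S"
proof -
  let ?K = "{u. length u < k}"
  have "finite S" using S finite_words by (rule finite_subset)
  have "S \<inter> ?K = {}" using S by (auto simp: words_def)
  define prod_power where "prod_power F = (\<Prod>u\<in>S. y ^ card (F u :: 'a set))" for F
  define is_tree :: "('a list \<Rightarrow> 'a set) \<Rightarrow> real"
    where "is_tree F = indicator {F. gw_tree (\<lambda>u (_::unit). F u) k () = S} F" for F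
  have restrict_S: "(\<Prod>u\<in>S. y ^ card (Wf u \<omega>)) = prod_power (restrict (\<lambda>u. Wf u \<omega>) S)" for \<omega>
    by (simp add: prod_power_def)
  have restrict_K: "indicator {\<omega> \<in> space M. gw_tree Wf k \<omega> = S} \<omega>
      = is_tree (restrict (\<lambda>u. Wf u \<omega>) ?K)" if "\<omega> \<in> space M" for \<omega>
    using that by (simp add: is_tree_def indicator_def gw_tree_eq_restrict[of k \<omega>])
  have "expectation (\<lambda>\<omega>. is_tree (restrict (\<lambda>u. Wf u \<omega>) ?K)) = generation_prob k S"
    by (simp add: restrict_K[symmetric] generation_prob_def sets.Int_space_eq2
        cong: Bochner_Integration.integral_cong)
  then show ?thesis
    using expectation_mult_offspring_restrict_fun[OF \<open>finite S\<close> finite_lists_shorter \<open>S \<inter> ?K = {}\<close>,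
        of prod_power is_tree]
      expectation_prod_offspring_power[OF \<open>finite S\<close> y]
    by (simp add: restrict_S restrict_K cong: Bochner_Integration.integral_cong)
qed

lemma expectation_power_card_gw_tree:
  "0 \<le> y \<Longrightarrow> y \<le> 1 \<Longrightarrow> expectation (\<lambda>\<omega>. y ^ card (gw_tree Wf k \<omega>)) = (offspring_pgf W ^^ k) y"
proof (induction k arbitrary: y)
  case 0
  then show ?case by (simp add: prob_space)
next
  case (Suc k)
  have "expectation (\<lambda>\<omega>. y ^ card (gw_tree Wf (Suc k) \<omega>))
      = expectation (\<lambda>\<omega>. \<Prod>u\<in>gw_tree Wf k \<omega>. y ^ card (Wf u \<omega>))"
    by (simp only: card_gw_tree_Suc power_sum)
  also have "\<dots> = (\<Sum>S\<in>Pow (words k). expectation (\<lambda>\<omega>. (\<Prod>u\<in>S. y ^ card (Wf u \<omega>))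
      * indicator {\<omega> \<in> space M. gw_tree Wf k \<omega> = S} \<omega>))"
    by (rule expectation_split_gw_tree[where H="\<lambda>S \<omega>. \<Prod>u\<in>S. y ^ card (Wf u \<omega>)"])
      (use Suc.prems in \<open>rule integrable_prod_offspring_power\<close>)
  also have "\<dots> = (\<Sum>S\<in>Pow (words k). offspring_pgf W y ^ card S * generation_prob k S)"
    using Suc.prems by (intro sum.cong refl expectation_prod_offspring_power_gw_tree_eq) auto
  also have "\<dots> = expectation (\<lambda>\<omega>. offspring_pgf W y ^ card (gw_tree Wf k \<omega>))"
    using expectation_fun_gw_tree[of "\<lambda>T. offspring_pgf W y ^ card T" k] by simp
  also have "\<dots> = (offspring_pgf W ^^ Suc k) y"
    using Suc.prems by (simp add: Suc.IH offspring_pgf_nonneg offspring_pgf_le_one funpow_Suc_right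
        del: funpow.simps)
  finally show ?case .
qed

lemma prob_gw_tree_empty: "prob {\<omega> \<in> space M. gw_tree Wf k \<omega> = {}} = (offspring_pgf W ^^ k) 0"
proof -
  have "(0::real) ^ card (gw_tree Wf k \<omega>) = indicator {\<omega> \<in> space M. gw_tree Wf k \<omega> = {}} \<omega>"
    if "\<omega> \<in> space M" for \<omega>
    using that finite_gw_tree[of Wf k \<omega>] by (simp add: indicator_def power_0_left)
  then have "expectation (\<lambda>\<omega>. (0::real) ^ card (gw_tree Wf k \<omega>))
      = prob {\<omega> \<in> space M. gw_tree Wf k \<omega> = {}}"
    by (simp add: sets.Int_space_eq2 cong: Bochner_Integration.integral_cong)
  then show ?thesis by (simp add: expectation_power_card_gw_tree)
qed

lemma funpow_offspring_pgf_zero_tendsto: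
  "(\<lambda>k. (offspring_pgf W ^^ k) 0) \<longlonglongrightarrow> gw_extinction_prob M Wf"
proof -
  define A where "A n = {\<omega> \<in> space M. gw_tree Wf n \<omega> = {}}" for n
  have "range A \<subseteq> events" unfolding A_def by auto
  moreover have "incseq A" unfolding A_def by (intro incseq_SucI) auto
  ultimately have "(\<lambda>n. prob (A n)) \<longlonglongrightarrow> prob (\<Union>n. A n)"
    by (rule finite_Lim_measure_incseq)
  moreover have "(\<Union>n. A n) = {\<omega> \<in> space M. \<exists>n. gw_tree Wf n \<omega> = {}}" unfolding A_def by auto
  ultimately show ?thesis by (simp add: A_def prob_gw_tree_empty gw_extinction_prob_def)
qed

lemma gw_g_eq_sum: "gw_g M Wf k a s = (\<Sum>S\<in>Pow (words k).
    generation_prob k S * measure_pmf.prob (percol_pmf k s) {B. card (S \<inter> B) < a})"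
proof -
  let ?P = "measure_pmf (percol_pmf k s)"
  let ?A = "\<lambda>S. {\<omega> \<in> space M. gw_tree Wf k \<omega> = S}"
  let ?B = "\<lambda>S. {B. card (S \<inter> B) < a}"
  interpret MP: prob_space "M \<Otimes>\<^sub>M ?P"
    by (rule prob_space_pair) (auto simp: prob_space_axioms prob_space_measure_pmf)
  have "{(\<omega>, B). \<omega> \<in> space M \<and> card (gw_tree Wf k \<omega> \<inter> B) < a}
      = (\<Union>S\<in>Pow (words k). ?A S \<times> ?B S)"
    using gw_tree_subset_words by fastforce
  then have "gw_g M Wf k a s = measure (M \<Otimes>\<^sub>M ?P) (\<Union>S\<in>Pow (words k). ?A S \<times> ?B S)"
    by (simp add: gw_g_def)
  also have "\<dots> = (\<Sum>S\<in>Pow (words k). measure (M \<Otimes>\<^sub>M ?P) (?A S \<times> ?B S))"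
    using finite_words
    by (intro measure_finite_Union) (auto simp: disjoint_family_on_def MP.emeasure_finite)
  also have "\<dots> = (\<Sum>S\<in>Pow (words k). generation_prob k S * measure ?P (?B S))"
  proof (intro sum.cong refl)
    fix S
    have "emeasure (M \<Otimes>\<^sub>M ?P) (?A S \<times> ?B S) = emeasure M (?A S) * emeasure ?P (?B S)"
      by (intro sigma_finite_measure.emeasure_pair_measure_Times prob_space_imp_sigma_finite
          prob_space_measure_pmf) auto
    then show "measure (M \<Otimes>\<^sub>M ?P) (?A S \<times> ?B S) = generation_prob k S * measure ?P (?B S)"
      by (simp add: generation_prob_def measure_def enn2real_mult)
  qed
  finally show ?thesis .
qed

lemma funpow_zero_le_gw_g:
  assumes "0 < a"
  shows "(offspring_pgf W ^^ k) 0 \<le> gw_g M Wf k a s"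
proof -
  have "(offspring_pgf W ^^ k) 0 = (\<Sum>S\<in>Pow (words k). if S = {} then generation_prob k S else 0)"
    using finite_words[of k] by (subst sum.delta) (auto simp: generation_prob_def prob_gw_tree_empty)
  also have "\<dots> \<le> gw_g M Wf k a s"
    unfolding gw_g_eq_sum using assms by (intro sum_mono) (auto simp: generation_prob_def)
  finally show ?thesis .
qed

lemma gw_g_le_funpow:
  assumes s: "0 \<le> s" "s \<le> 1" and x: "0 < x" "x \<le> 1"
  shows "gw_g M Wf k a s \<le> (offspring_pgf W ^^ k) (s + (1 - s) * x) / x ^ a"
proof -
  have "gw_g M Wf k a s \<le> (\<Sum>S\<in>Pow (words k). generation_prob k S * ((s + (1 - s) * x) ^ card S / x ^ a))"
    unfolding gw_g_eq_sum using s x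
    by (intro sum_mono mult_left_mono prob_percol_card_less_le) (auto simp: generation_prob_def)
  also have "\<dots> = expectation (\<lambda>\<omega>. (s + (1 - s) * x) ^ card (gw_tree Wf k \<omega>)) / x ^ a"
    using expectation_fun_gw_tree[of "\<lambda>T. (s + (1 - s) * x) ^ card T" k]
    by (simp add: sum_divide_distrib mult.commute)
  also have "\<dots> = (offspring_pgf W ^^ k) (s + (1 - s) * x) / x ^ a"
  proof -
    have "(1 - s) * x \<le> 1 - s" using s x by (simp add: mult_left_le)
    then show ?thesis using s x by (simp add: expectation_power_card_gw_tree)
  qed
  finally show ?thesis .
qed

text \<open>The choice \<open>x = 1 - \<delta> / a\<close> in the previous bound, with \<open>x ^ a \<ge> 1 - \<delta>\<close> by Bernoulli's
  inequality.\<close>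
lemma gw_g_le_funpow_div:
  assumes s: "0 \<le> s" "s \<le> 1" and \<delta>: "0 < \<delta>" "\<delta> < 1" and "0 < a"
  shows "gw_g M Wf k a s \<le> (offspring_pgf W ^^ k) (1 - (1 - s) * \<delta> / a) / (1 - \<delta>)"
proof -
  define x where "x = 1 - \<delta> / a"
  have x: "0 < x" "x \<le> 1" using \<delta> \<open>0 < a\<close> by (auto simp: x_def field_simps)
  have "(1 - s) * \<delta> / a \<le> 1"
    using mult_le_one[of "1 - s" \<delta>] s \<delta> \<open>0 < a\<close> by (simp add: divide_le_eq_1)
  have "1 - \<delta> \<le> x ^ a"
    using Bernoulli_inequality[of "- \<delta> / a" a] \<delta> \<open>0 < a\<close> by (simp add: x_def field_simps)
  have "gw_g M Wf k a s \<le> (offspring_pgf W ^^ k) (s + (1 - s) * x) / x ^ a"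
    by (rule gw_g_le_funpow[OF s x])
  also have "s + (1 - s) * x = 1 - (1 - s) * \<delta> / a"
    using \<open>0 < a\<close> by (simp add: x_def field_simps)
  also have "(offspring_pgf W ^^ k) (1 - (1 - s) * \<delta> / a) / x ^ a
      \<le> (offspring_pgf W ^^ k) (1 - (1 - s) * \<delta> / a) / (1 - \<delta>)"
    using \<open>1 - \<delta> \<le> x ^ a\<close> \<open>(1 - s) * \<delta> / a \<le> 1\<close> \<delta>
    by (intro divide_left_mono funpow_offspring_pgf_nonneg) auto
  finally show ?thesis .
qed

lemma eventually_gw_g_le_div:
  assumes c: "1 \<le> c" "c < offspring_mean W"
    and a: "\<forall>\<^sub>F k in sequentially. real (a k) \<le> c ^ k" "\<And>k. 0 < a k"
    and s: "0 < s" "s < 1" and \<delta>: "0 < \<delta>" "\<delta> < 1"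
  shows "\<forall>\<^sub>F k in sequentially.
    gw_g M Wf k (a k) s \<le> (gw_extinction_prob M Wf + \<delta>) / (1 - \<delta>)"
proof -
  define q where "q = gw_extinction_prob M Wf"
  have "(\<lambda>k. (offspring_pgf W ^^ k) (1 - (1 - s) * \<delta> / c ^ k)) \<longlonglongrightarrow> q"
    using s \<delta> funpow_offspring_pgf_zero_tendsto
    by (intro funpow_offspring_pgf_rate_tendsto[OF _ c]) (auto simp: q_def intro: mult_le_one)
  from order_tendstoD(2)[OF this, of "q + \<delta>"] \<delta>
  have "\<forall>\<^sub>F k in sequentially. (offspring_pgf W ^^ k) (1 - (1 - s) * \<delta> / c ^ k) \<le> q + \<delta>"
    by (auto elim: eventually_mono)
  with a(1) show ?thesis
    unfolding q_def[symmetric]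
  proof eventually_elim
    case (elim k)
    have le_c: "(1 - s) * \<delta> / c ^ k \<le> (1 - s) * \<delta> / a k"
      using elim(1) s \<delta> a(2)[of k] by (intro divide_left_mono) auto
    have "gw_g M Wf k (a k) s \<le> (offspring_pgf W ^^ k) (1 - (1 - s) * \<delta> / a k) / (1 - \<delta>)"
      using s \<delta> a(2) by (intro gw_g_le_funpow_div) auto
    also have "\<dots> \<le> (offspring_pgf W ^^ k) (1 - (1 - s) * \<delta> / c ^ k) / (1 - \<delta>)"
    proof -
      have "(1 - s) * \<delta> / a k \<le> 1"
        using mult_le_one[of "1 - s" \<delta>] s \<delta> a(2)[of k] by (simp add: divide_le_eq_1)
      then show ?thesis using le_c \<delta> by (intro divide_right_mono funpow_offspring_pgf_mono) auto
    qed
    also have "\<dots> \<le> (q + \<delta>) / (1 - \<delta>)"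
      using elim(2) \<delta> by (intro divide_right_mono) auto
    finally show ?case .
  qed
qed

lemma eventually_gw_g_le:
  assumes c: "1 \<le> c" "c < offspring_mean W"
    and a: "\<forall>\<^sub>F k in sequentially. real (a k) \<le> c ^ k" "\<And>k. 0 < a k"
    and s: "0 < s" "s < 1" and "0 < e"
  shows "\<forall>\<^sub>F k in sequentially. gw_g M Wf k (a k) s \<le> gw_extinction_prob M Wf + e"
proof -
  define q where "q = gw_extinction_prob M Wf"
  note lim = funpow_offspring_pgf_zero_tendsto[folded q_def]
  have "q \<le> 1"
    by (rule LIMSEQ_le_const2[OF lim]) (auto intro!: exI[of _ 0] funpow_offspring_pgf_le_one)
  define \<delta> where "\<delta> = min (1 / 2) (e / 4)"
  have \<delta>: "0 < \<delta>" "\<delta> \<le> 1 / 2" "\<delta> \<le> e / 4" using \<open>0 < e\<close> by (auto simp: \<delta>_def)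
  have "\<delta> * e \<le> e / 2" using mult_right_mono[OF \<delta>(2), of e] \<open>0 < e\<close> by simp
  moreover have "\<delta> * q \<le> \<delta>" using mult_left_mono[OF \<open>q \<le> 1\<close>, of \<delta>] \<delta> by simp
  moreover have "(q + e) * (1 - \<delta>) = q + e - \<delta> * q - \<delta> * e" by (simp add: algebra_simps)
  ultimately have "q + \<delta> \<le> (q + e) * (1 - \<delta>)" using \<delta> by linarith
  then have "(q + \<delta>) / (1 - \<delta>) \<le> q + e" using \<delta> by (simp add: pos_divide_le_eq)
  with eventually_gw_g_le_div[OF c a s, of \<delta>] \<delta> show ?thesis
    unfolding q_def[symmetric] by (auto elim: eventually_mono)
qed

end

theorem lemma4p3:
  fixes M :: "'m measure" and W :: "('a::finite) set pmf"
    and Wf :: "'a list \<Rightarrow> 'm \<Rightarrow> 'a set" and a :: "nat \<Rightarrow> nat" and s :: real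
  assumes "prob_space M"
    and "prob_space.indep_vars M (\<lambda>_. count_space UNIV) Wf UNIV"
    and "\<And>u. distr M (count_space UNIV) (Wf u) = measure_pmf W"
    and "\<And>i. measure_pmf.prob W {S. i \<in> S} > 0"
    and "measure_pmf.expectation W (\<lambda>S. real (card S)) > 1"
    and "\<And>k. a k > 0"
    and "limsup (\<lambda>k. ereal (root k (real (a k)))) < ereal (measure_pmf.expectation W (\<lambda>S. real (card S)))"
    and "0 < s" and "s < 1"
  shows "(\<lambda>k. gw_g M Wf k (a k) s) \<longlonglongrightarrow> gw_extinction_prob M Wf"
proof -
  interpret galton_watson M W Wf
    using assms(1-3) by (simp add: galton_watson_def galton_watson_axioms_def)
  obtain c where c: "1 \<le> c" "c < offspring_mean W"
    and a: "\<forall>\<^sub>F k in sequentially. real (a k) \<le> c ^ k"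
    using eventually_le_power_of_limsup_root[of "\<lambda>k. real (a k)"] assms(5,7)
    by (auto simp: offspring_mean_def)
  show ?thesis
  proof (rule tendsto_above_lower_limit[OF funpow_offspring_pgf_zero_tendsto])
    show "(offspring_pgf W ^^ k) 0 \<le> gw_g M Wf k (a k) s" for k
      using assms(6) by (rule funpow_zero_le_gw_g)
    show "\<forall>\<^sub>F k in sequentially. gw_g M Wf k (a k) s \<le> gw_extinction_prob M Wf + e" if "e > 0" for e
      using c a assms(6,8,9) that by (rule eventually_gw_g_le)
  qed
qed

end
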